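(* Let $n\ge 1$, let $p,p_1,\dots,p_n$ be distinct propositional variables and $s\neq *$ a standpoint symbol. Let $C_n$ be the formula $(\neg p_1\wedge\cdots\wedge\neg p_n)\wedge G\big(p_1\wedge\cdots\wedge p_n\to X(\neg p_1\wedge\cdots\wedge\neg p_n)\big)\wedge\bigwedge_{1\le i\le n}G\Big(\big(\neg p_i\wedge\bigwedge_{i<i'\le n}p_{i'}\big)\to\big(\bigwedge_{i<i'\le n}X\neg p_{i'}\wedge Xp_i\wedge\bigwedge_{1\le i'<i}(p_{i'}\leftrightarrow Xp_{i'})\big)\Big)$, and let $\varphi_C=G\big(\Diamond_s(C_n\wedge p\wedge XG\neg p)\big)$. Then $\varphi_C$ is $\mathrm{SLTL}$-satisfiable. Moreover, for every $\mathrm{SLTL}$ model $M=(\Pi,\lambda)$ and $\sigma\in\Pi$ with $M,\sigma,0\models\varphi_C$: (1) $\lambda(s)$ is infinite; (2) for every $i>2^n$ and every $m\in\{0,\dots,2^n-1\}$ there is $\sigma'\in\Pi$ such that $M,\sigma',i\models \mathtt{C}=m$; (3) for every $i>2^n$ there are $\sigma_1,\dots,\sigma_{2^n}\in\Pi$ such that $|\{\sigma_j(i)\cap\{p_1,\dots,p_n\}: j\in\{1,\dots,2^n\}\}|=2^n$.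
   Context: Fix a countably infinite set $\mathcal{P}$ of propositional variables and a countably infinite set $\mathcal{S}$ of standpoint symbols containing a distinguished universal standpoint symbol $*$. SLTL formulae: $\varphi ::= p \mid s \preceq s' \mid \neg\varphi \mid \varphi\wedge\varphi \mid \Diamond_s\varphi \mid \Box_s\varphi \mid X\varphi \mid \varphi\,U\,\varphi$. A model is $M=(\Pi,\lambda)$ with $\Pi\neq\emptyset$ a set of traces $\sigma:\mathbb{N}\to 2^{\mathcal{P}}$ and $\lambda:\mathcal{S}\to 2^{\Pi}\setminus\{\emptyset\}$, $\lambda( * )=\Pi$. Semantics: $M,\sigma,i\models p$ iff $p\in\sigma(i)$; $M,\sigma,i\models s\preceq s'$ iff $\lambda(s)\subseteq\lambda(s')$; Boolean clauses as usual; $M,\sigma,i\models\Diamond_s\psi$ iff $M,\sigma',i\models\psi$ for some $\sigma'\in\lambda(s)$; $\Box_s$ dually with "for all"; $M,\sigma,i\models X\psi$ iff $M,\sigma,i+1\models\psi$; $M,\sigma,i\models\psi\,U\,\chi$ iff there is $i'\ge i$ with $M,\sigma,i'\models\chi$ and $M,\sigma,i''\models\psi$ for all $i\le i''<i'$. $G\psi$ abbreviates $\neg(\top\,U\,\neg\psi)$ ("always in the future, including now"). $\varphi$ is satisfiable iff $M,\sigma,0\models\varphi$ for some model $M=(\Pi,\lambda)$ and $\sigma\in\Pi$. For $m\in\{0,\dots,2^n-1\}$, $M,\sigma,i\models\mathtt{C}=m$ means that the bit string $b_1\cdots b_n$ with $b_j=1$ iff $p_j\in\sigma(i)$ ($b_1$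 most significant) is the binary representation of $m$. *)

theory Defs
  imports Main
begin

datatype stand = Univ | Sp nat

datatype fml =
    Prop nat
  | Sharp stand stand
  | Neg fml
  | And fml fml
  | Dia stand fml
  | Box stand fml
  | Next fml
  | Until fml fml

type_synonym trace = "nat \<Rightarrow> nat set"

definition is_model :: "trace set \<Rightarrow> (stand \<Rightarrow> trace set) \<Rightarrow> bool" where
  "is_model Pi L \<longleftrightarrow> Pi \<noteq> {} \<and> (\<forall>s. L s \<subseteq> Pi \<and> L s \<noteq> {}) \<and> L Univ = Pi"

fun sat :: "trace set \<Rightarrow> (stand \<Rightarrow> trace set) \<Rightarrow> trace \<Rightarrow> nat \<Rightarrow> fml \<Rightarrow> bool" where
  "sat Pi L \<sigma> i (Prop p) = (p \<in> \<sigma> i)"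
| "sat Pi L \<sigma> i (Sharp s s') = (L s \<subseteq> L s')"
| "sat Pi L \<sigma> i (Neg \<psi>) = (\<not> sat Pi L \<sigma> i \<psi>)"
| "sat Pi L \<sigma> i (And \<psi> \<chi>) = (sat Pi L \<sigma> i \<psi> \<and> sat Pi L \<sigma> i \<chi>)"
| "sat Pi L \<sigma> i (Dia s \<psi>) = (\<exists>\<sigma>'\<in>L s. sat Pi L \<sigma>' i \<psi>)"
| "sat Pi L \<sigma> i (Box s \<psi>) = (\<forall>\<sigma>'\<in>L s. sat Pi L \<sigma>' i \<psi>)"
| "sat Pi L \<sigma> i (Next \<psi>) = sat Pi L \<sigma> (Suc i) \<psi>"
| "sat Pi L \<sigma> i (Until \<psi> \<chi>) =
     (\<exists>i'\<ge>i. sat Pi L \<sigma> i' \<chi> \<and> (\<forall>i''. i \<le> i'' \<and> i'' < i' \<longrightarrow> sat Pi L \<sigma> i'' \<psi>))"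

definition Top :: fml where "Top = Neg (And (Prop 0) (Neg (Prop 0)))"
definition Imp :: "fml \<Rightarrow> fml \<Rightarrow> fml" where "Imp a b = Neg (And a (Neg b))"
definition Iff :: "fml \<Rightarrow> fml \<Rightarrow> fml" where "Iff a b = And (Imp a b) (Imp b a)"
definition Glob :: "fml \<Rightarrow> fml" where "Glob \<psi> = Neg (Until Top (Neg \<psi>))"
definition Conj :: "fml list \<Rightarrow> fml" where "Conj xs = foldr And xs Top"

definition satisfiable :: "fml \<Rightarrow> bool" where
  "satisfiable \<phi> \<longleftrightarrow> (\<exists>Pi L \<sigma>. is_model Pi L \<and> \<sigma> \<in> Pi \<and> sat Pi L \<sigma> 0 \<phi>)"

text \<open>The counter formula C_n over variables ps = [p_1, ..., p_n] (0-indexed list: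
p_j = ps ! (j-1)).\<close>

definition counter_fml :: "nat list \<Rightarrow> fml" where
  "counter_fml ps = (let n = length ps; q = (\<lambda>j. Prop (ps ! j)) in
     And (Conj [Neg (q j). j \<leftarrow> [0..<n]])
      (And (Glob (Imp (Conj [q j. j \<leftarrow> [0..<n]]) (Next (Conj [Neg (q j). j \<leftarrow> [0..<n]]))))
        (Conj [Glob (Imp (And (Neg (q i)) (Conj [q i'. i' \<leftarrow> [Suc i..<n]]))
                        (And (Conj [Next (Neg (q i')). i' \<leftarrow> [Suc i..<n]])
                          (And (Next (q i))
                               (Conj [Iff (q i') (Next (q i')). i' \<leftarrow> [0..<i]]))))
               . i \<leftarrow> [0..<n]])))"

definition phi_C :: "nat list \<Rightarrow> nat \<Rightarrow> stand \<Rightarrow> fml" where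
  "phi_C ps p s = Glob (Dia s (And (counter_fml ps) (And (Prop p) (Next (Glob (Neg (Prop p)))))))"

text \<open>Value of the counter at position i of trace sigma: bit string b_1...b_n,
b_j = 1 iff p_j in sigma(i), b_1 most significant.\<close>

definition counter_val :: "nat list \<Rightarrow> trace \<Rightarrow> nat \<Rightarrow> nat" where
  "counter_val ps \<sigma> i = (\<Sum>j<length ps. if ps ! j \<in> \<sigma> i then 2 ^ (length ps - 1 - j) else 0)"

end

theory Submission
  imports Defs
begin

text \<open>The conjuncts of \<open>C\<^sub>n\<close> say that the bits \<open>p\<^sub>1 \<dots> p\<^sub>n\<close> are all off at the
evaluation point and that, at every later position, the bit vector is obtained from the previous one by
binary increment: the last zero bit is set, the ones after it are cleared, the bits before it are kept.
So a trace satisfying \<open>C\<^sub>n\<close> at time \<open>i\<close> carries the counter value \<open>d mod 2\<^sup>n\<close> at time \<open>i + d\<close>.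
The formula \<open>\<phi>\<^sub>C\<close> demands, for every time \<open>i\<close>, a trace \<open>g i \<in> \<lambda>(s)\<close> starting such a counter at
\<open>i\<close> and carrying \<open>p\<close> at \<open>i\<close> but never afterwards; hence the \<open>g i\<close> are pairwise distinct and
\<open>\<lambda>(s)\<close> is infinite, and at a time \<open>i \<ge> 2\<^sup>n\<close> the traces \<open>g (i - m)\<close>, \<open>m < 2\<^sup>n\<close>, show all
\<open>2\<^sup>n\<close> counter values. Conversely, the set of all these canonical counter traces, with every
standpoint interpreted as the whole set, is a model of \<open>\<phi>\<^sub>C\<close>.\<close>

lemma sat_Top [simp]: "sat Pi L \<sigma> i Top"
  by (simp add: Top_def)

lemma sat_Imp [simp]: "sat Pi L \<sigma> i (Imp \<psi> \<chi>) \<longleftrightarrow> (sat Pi L \<sigma> i \<psi> \<longrightarrow> sat Pi L \<sigma> i \<chi>)"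
  by (simp add: Imp_def)

lemma sat_Iff [simp]: "sat Pi L \<sigma> i (Iff \<psi> \<chi>) \<longleftrightarrow> (sat Pi L \<sigma> i \<psi> \<longleftrightarrow> sat Pi L \<sigma> i \<chi>)"
  by (auto simp: Iff_def)

lemma sat_Glob [simp]: "sat Pi L \<sigma> i (Glob \<psi>) \<longleftrightarrow> (\<forall>t\<ge>i. sat Pi L \<sigma> t \<psi>)"
  by (auto simp: Glob_def)

lemma sat_Conj [simp]: "sat Pi L \<sigma> i (Conj \<psi>s) \<longleftrightarrow> (\<forall>\<psi>\<in>set \<psi>s. sat Pi L \<sigma> i \<psi>)"
  by (induction \<psi>s) (auto simp: Conj_def)

definition trace_bits :: "nat list \<Rightarrow> trace \<Rightarrow> nat \<Rightarrow> nat \<Rightarrow> bool" where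
  "trace_bits ps \<sigma> t j \<longleftrightarrow> ps ! j \<in> \<sigma> t"

definition counter_step :: "nat \<Rightarrow> (nat \<Rightarrow> bool) \<Rightarrow> (nat \<Rightarrow> bool) \<Rightarrow> bool" where
  "counter_step n a b \<longleftrightarrow>
     ((\<forall>j<n. a j) \<longrightarrow> (\<forall>j<n. \<not> b j)) \<and>
     (\<forall>k<n. \<not> a k \<and> (\<forall>j. k < j \<and> j < n \<longrightarrow> a j) \<longrightarrow>
        (\<forall>j. k < j \<and> j < n \<longrightarrow> \<not> b j) \<and> b k \<and> (\<forall>j<k. a j = b j))"

lemma sat_counter_fml:
  "sat Pi L \<sigma> i (counter_fml ps) \<longleftrightarrow>
     (\<forall>j<length ps. \<not> trace_bits ps \<sigma> i j) \<and>
     (\<forall>t\<ge>i. counter_step (length ps) (trace_bits ps \<sigma> t) (trace_bits ps \<sigma> (Suc t)))"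
proof -
  \<comment> \<open>\<open>C\<^sub>n\<close> has one \<open>G\<close>-conjunct per bit; they are gathered into one step per position.\<close>
  have swap: "(\<forall>k<n. \<forall>t\<ge>i. C k t) \<longleftrightarrow> (\<forall>t\<ge>i. \<forall>k<n. C k t)" for n and C :: "nat \<Rightarrow> nat \<Rightarrow> bool"
    by blast
  show ?thesis
    unfolding counter_fml_def counter_step_def trace_bits_def
    by (simp add: Let_def atLeast0LessThan)
      (simp only: Ball_def lessThan_iff atLeastLessThan_iff Suc_le_eq swap imp_conjR all_conj_distrib)
qed

lemma counter_step_cong:
  assumes "\<And>j. j < n \<Longrightarrow> a j = a' j" "\<And>j. j < n \<Longrightarrow> b j = b' j"
  shows "counter_step n a b \<longleftrightarrow> counter_step n a' b'"
  unfolding counter_step_def using assms by simp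

definition bin_val :: "nat \<Rightarrow> (nat \<Rightarrow> bool) \<Rightarrow> nat" where
  "bin_val n a = (\<Sum>j<n. if a j then 2 ^ (n - 1 - j) else 0)"

lemma counter_val_eq_bin_val: "counter_val ps \<sigma> t = bin_val (length ps) (trace_bits ps \<sigma> t)"
  by (simp add: counter_val_def bin_val_def trace_bits_def)

lemma bin_val_cong: "(\<And>j. j < n \<Longrightarrow> a j = b j) \<Longrightarrow> bin_val n a = bin_val n b"
  unfolding bin_val_def by (rule sum.cong) auto

lemma sum_pow2_atLeastLessThan:
  "k \<le> n \<Longrightarrow> (\<Sum>j=k..<n. (2::nat) ^ (n - 1 - j)) + 1 = 2 ^ (n - k)"
proof (induction k rule: inc_induct)
  case (step k)
  have "(\<Sum>j=k..<n. (2::nat) ^ (n - 1 - j)) + 1 = 2 ^ (n - Suc k) + ((\<Sum>j=Suc k..<n. 2 ^ (n - 1 - j)) + 1)"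
    using step.hyps by (simp add: sum.atLeast_Suc_lessThan)
  also have "\<dots> = 2 ^ Suc (n - Suc k)"
    using step.IH by simp
  also have "\<dots> = 2 ^ (n - k)"
    using step.hyps by (simp add: Suc_diff_Suc)
  finally show ?case .
qed simp

lemma bin_val_all_True: "(\<And>j. j < n \<Longrightarrow> a j) \<Longrightarrow> bin_val n a + 1 = 2 ^ n"
  using sum_pow2_atLeastLessThan[of 0 n] by (simp add: bin_val_def atLeast0LessThan)

lemma bin_val_less: "bin_val n a < 2 ^ n"
proof -
  have "bin_val n a \<le> bin_val n (\<lambda>_. True)"
    unfolding bin_val_def by (rule sum_mono) simp
  then show ?thesis
    using bin_val_all_True[of n "\<lambda>_. True"] by simp
qed

definition last_zero :: "nat \<Rightarrow> (nat \<Rightarrow> bool) \<Rightarrow> nat" where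
  "last_zero n a = Max {j. j < n \<and> \<not> a j}"

lemma last_zero_eq_iff:
  assumes "\<not> (\<forall>j<n. a j)"
  shows "last_zero n a = k \<longleftrightarrow> k < n \<and> \<not> a k \<and> (\<forall>j. k < j \<and> j < n \<longrightarrow> a j)"
  unfolding last_zero_def using assms by (subst Max_eq_iff) (auto simp: not_le)

text \<open>Bit \<open>j\<close> stands for \<open>p\<^sub>j\<^sub>+\<^sub>1\<close>, so bit \<open>0\<close> is the most significant one and the carry of an
increment stops at the last zero bit.\<close>

definition bin_incr :: "nat \<Rightarrow> (nat \<Rightarrow> bool) \<Rightarrow> nat \<Rightarrow> bool" where
  "bin_incr n a = (if \<forall>j<n. a j then (\<lambda>_. False)
     else (\<lambda>j. j < last_zero n a \<and> a j \<or> j = last_zero n a))"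

lemma counter_step_iff_bin_incr: "counter_step n a b \<longleftrightarrow> (\<forall>j<n. b j = bin_incr n a j)"
proof (cases "\<forall>j<n. a j")
  case True
  then show ?thesis
    by (simp add: counter_step_def bin_incr_def)
next
  case False
  define k where "k = last_zero n a"
  have trigger: "k' < n \<and> \<not> a k' \<and> (\<forall>j. k' < j \<and> j < n \<longrightarrow> a j) \<longleftrightarrow> k' = k" for k'
    using last_zero_eq_iff[OF False, of k'] k_def by (simp add: eq_commute)
  have k: "k < n \<and> \<not> a k \<and> (\<forall>j. k < j \<and> j < n \<longrightarrow> a j)"
    using trigger[of k] by simp
  have "counter_step n a b \<longleftrightarrow> (\<forall>j. k < j \<and> j < n \<longrightarrow> \<not> b j) \<and> b k \<and> (\<forall>j<k. a j = b j)"
    using False trigger unfolding counter_step_def by (simp only: imp_conjL[symmetric] conj_assoc) simp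
  also have "\<dots> \<longleftrightarrow> (\<forall>j<n. b j = (j < k \<and> a j \<or> j = k))"
  proof
    assume "(\<forall>j. k < j \<and> j < n \<longrightarrow> \<not> b j) \<and> b k \<and> (\<forall>j<k. a j = b j)"
    then show "\<forall>j<n. b j = (j < k \<and> a j \<or> j = k)"
      by (metis linorder_neqE_nat)
  next
    assume "\<forall>j<n. b j = (j < k \<and> a j \<or> j = k)"
    then show "(\<forall>j. k < j \<and> j < n \<longrightarrow> \<not> b j) \<and> b k \<and> (\<forall>j<k. a j = b j)"
      using k by force
  qed
  also have "\<dots> \<longleftrightarrow> (\<forall>j<n. b j = bin_incr n a j)"
    by (simp only: bin_incr_def if_not_P[OF False] k_def)
  finally show ?thesis .
qed

lemma bin_val_bin_incr: "bin_val n (bin_incr n a) = (bin_val n a + 1) mod 2 ^ n"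
proof (cases "\<forall>j<n. a j")
  case True
  then have "bin_incr n a = (\<lambda>_. False)"
    by (simp only: bin_incr_def if_P)
  then show ?thesis
    using bin_val_all_True[of n a] True by (simp add: bin_val_def)
next
  case False
  define k where "k = last_zero n a"
  have k: "k < n" "\<not> a k" "\<forall>j. k < j \<and> j < n \<longrightarrow> a j"
    using last_zero_eq_iff[OF False, of k] k_def by simp_all
  have incr: "bin_incr n a = (\<lambda>j. j < k \<and> a j \<or> j = k)"
    by (simp only: bin_incr_def if_not_P[OF False] k_def)
  have split: "sum f {..<n} = sum f {..<k} + f k + sum f {Suc k..<n}" for f :: "nat \<Rightarrow> nat"
  proof -
    have "sum f {..<n} = sum f {..<k} + sum f {k..<n}"
      using k(1) ivl_disj_un_one(2)[of k n] ivl_disj_int_one(2)[of k n]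
      by (metis finite_lessThan finite_atLeastLessThan less_imp_le sum.union_disjoint)
    also have "sum f {k..<n} = f k + sum f {Suc k..<n}"
      using k(1) by (simp add: sum.atLeast_Suc_lessThan)
    finally show ?thesis
      by simp
  qed
  have "bin_val n a + 1 = (\<Sum>j<k. if a j then 2 ^ (n - 1 - j) else 0) + ((\<Sum>j=Suc k..<n. 2 ^ (n - 1 - j)) + 1)"
    unfolding bin_val_def split using k by simp
  also have "\<dots> = bin_val n (bin_incr n a)"
    unfolding bin_val_def split incr using k sum_pow2_atLeastLessThan[of "Suc k" n] by simp
  finally show ?thesis
    using bin_val_less[of n "bin_incr n a"] by simp
qed

definition bin_count :: "nat \<Rightarrow> nat \<Rightarrow> nat \<Rightarrow> bool" where
  "bin_count n m = (bin_incr n ^^ m) (\<lambda>_. False)"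

lemma counter_step_bin_count: "counter_step n (bin_count n m) (bin_count n (Suc m))"
  by (simp add: bin_count_def counter_step_iff_bin_incr)

lemma bin_val_counter_step:
  "counter_step n a b \<Longrightarrow> bin_val n b = (bin_val n a + 1) mod 2 ^ n"
  using bin_val_cong[of n b "bin_incr n a"] bin_val_bin_incr
  by (simp add: counter_step_iff_bin_incr)

definition counter_trace :: "nat list \<Rightarrow> nat \<Rightarrow> nat \<Rightarrow> trace" where
  "counter_trace ps p i t = (if t = i then {p} else {}) \<union>
     (!) ps ` {j. j < length ps \<and> bin_count (length ps) (t - i) j}"

lemma trace_bits_counter_trace:
  assumes "distinct ps" "p \<notin> set ps" "j < length ps"
  shows "trace_bits ps (counter_trace ps p i) t j \<longleftrightarrow> bin_count (length ps) (t - i) j"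
proof -
  have "ps ! j \<noteq> p"
    using nth_mem[OF assms(3)] assms(2) by auto
  moreover have "ps ! j \<in> (!) ps ` {j'. j' < length ps \<and> R j'} \<longleftrightarrow> R j" for R
    using inj_on_image_mem_iff[OF inj_on_nth[OF assms(1), of "{..<length ps}"], of j "{j'. j' < length ps \<and> R j'}"]
      assms(3) by (simp add: subset_eq)
  ultimately show ?thesis
    unfolding trace_bits_def counter_trace_def by simp
qed

lemma p_in_counter_trace:
  assumes "p \<notin> set ps"
  shows "p \<in> counter_trace ps p i t \<longleftrightarrow> t = i"
proof -
  have "p \<notin> (!) ps ` {j. j < length ps \<and> R j}" for R
    using assms nth_mem by blast
  then show ?thesis
    by (simp add: counter_trace_def)
qed

lemma sat_counter_fml_counter_trace:
  assumes "distinct ps" "p \<notin> set ps"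
  shows "sat Pi L (counter_trace ps p i) i (counter_fml ps)"
  unfolding sat_counter_fml
proof (intro conjI allI impI)
  show "\<not> trace_bits ps (counter_trace ps p i) i j" if "j < length ps" for j
    using trace_bits_counter_trace[OF assms that] by (simp add: bin_count_def)
  show "counter_step (length ps) (trace_bits ps (counter_trace ps p i) t)
          (trace_bits ps (counter_trace ps p i) (Suc t))" if "i \<le> t" for t
  proof -
    have "Suc t - i = Suc (t - i)"
      using that by (rule Suc_diff_le)
    then show ?thesis
      using counter_step_bin_count[of "length ps" "t - i"] trace_bits_counter_trace[OF assms]
        counter_step_cong[of "length ps" "trace_bits ps (counter_trace ps p i) t" "bin_count (length ps) (t - i)"
          "trace_bits ps (counter_trace ps p i) (Suc t)" "bin_count (length ps) (Suc t - i)"]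
      by simp
  qed
qed

lemma sat_phi_C:
  "sat Pi L \<sigma> i (phi_C ps p s) \<longleftrightarrow>
     (\<forall>t\<ge>i. \<exists>\<sigma>'\<in>L s. sat Pi L \<sigma>' t (counter_fml ps) \<and> p \<in> \<sigma>' t \<and> (\<forall>t'>t. p \<notin> \<sigma>' t'))"
  by (simp add: phi_C_def Suc_le_eq)

lemma satisfiable_phi_C:
  assumes "distinct ps" "p \<notin> set ps"
  shows "satisfiable (phi_C ps p s)"
proof -
  let ?Pi = "range (counter_trace ps p)"
  have "is_model ?Pi (\<lambda>_. ?Pi)"
    by (auto simp: is_model_def)
  moreover have "sat ?Pi (\<lambda>_. ?Pi) (counter_trace ps p 0) 0 (phi_C ps p s)"
    unfolding sat_phi_C
  proof (intro allI impI)
    fix t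
    show "\<exists>\<sigma>'\<in>?Pi. sat ?Pi (\<lambda>_. ?Pi) \<sigma>' t (counter_fml ps) \<and> p \<in> \<sigma>' t \<and> (\<forall>t'>t. p \<notin> \<sigma>' t')"
    proof (rule bexI[of _ "counter_trace ps p t"])
      show "sat ?Pi (\<lambda>_. ?Pi) (counter_trace ps p t) t (counter_fml ps) \<and> p \<in> counter_trace ps p t t \<and>
          (\<forall>t'>t. p \<notin> counter_trace ps p t t')"
        using sat_counter_fml_counter_trace[OF assms] p_in_counter_trace[OF assms(2)] by simp
    qed simp
  qed
  ultimately show ?thesis
    unfolding satisfiable_def by blast
qed

lemma counter_val_from_start:
  assumes "sat Pi L \<sigma> i (counter_fml ps)"
  shows "counter_val ps \<sigma> (i + d) = d mod 2 ^ length ps"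
proof (induction d)
  case 0
  show ?case
    using assms by (simp add: sat_counter_fml counter_val_eq_bin_val bin_val_def)
next
  case (Suc d)
  have "counter_step (length ps) (trace_bits ps \<sigma> (i + d)) (trace_bits ps \<sigma> (Suc (i + d)))"
    using assms by (simp add: sat_counter_fml)
  then show ?case
    using Suc.IH by (simp add: counter_val_eq_bin_val bin_val_counter_step mod_Suc_eq)
qed

lemma phi_C_witnesses:
  assumes "sat Pi L \<sigma> 0 (phi_C ps p s)"
  obtains g where "range g \<subseteq> L s" "inj g"
    "\<And>i d. counter_val ps (g i) (i + d) = d mod 2 ^ length ps"
proof -
  have "\<forall>i. \<exists>\<sigma>'. \<sigma>' \<in> L s \<and> sat Pi L \<sigma>' i (counter_fml ps) \<and> p \<in> \<sigma>' i \<and> (\<forall>t>i. p \<notin> \<sigma>' t)"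
    using assms unfolding sat_phi_C by blast
  then obtain g where "\<forall>i. g i \<in> L s \<and> sat Pi L (g i) i (counter_fml ps) \<and> p \<in> g i i \<and> (\<forall>t>i. p \<notin> g i t)"
    by (rule choice[THEN exE])
  then have g: "\<And>i. g i \<in> L s" "\<And>i. sat Pi L (g i) i (counter_fml ps)"
    "\<And>i. p \<in> g i i" "\<And>i t. i < t \<Longrightarrow> p \<notin> g i t"
    by auto
  have "inj g"
  proof (rule injI)
    fix i j
    assume "g i = g j"
    then show "i = j"
      using g(3)[of i] g(3)[of j] g(4)[of i j] g(4)[of j i] by (cases i j rule: linorder_cases) auto
  qed
  then show thesis
    using that g(1,2) counter_val_from_start by blast
qed

lemma counter_val_cong:
  "\<sigma> t \<inter> set ps = \<sigma>' t \<inter> set ps \<Longrightarrow> counter_val ps \<sigma> t = counter_val ps \<sigma>' t"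
  unfolding counter_val_def by (intro sum.cong refl) (metis Int_iff lessThan_iff nth_mem)

lemma card_image_trace_slices:
  assumes "inj_on (\<lambda>j. counter_val ps (f j) t) A"
  shows "card ((\<lambda>j. f j t \<inter> set ps) ` A) = card A"
proof (rule card_image, rule inj_onI)
  fix x y
  assume "x \<in> A" "y \<in> A" "f x t \<inter> set ps = f y t \<inter> set ps"
  then show "x = y"
    using assms counter_val_cong by (metis inj_on_def)
qed

lemma card_slices_of_staggered_counters:
  assumes "\<And>i d. counter_val ps (g i) (i + d) = d mod 2 ^ length ps" and "2 ^ length ps \<le> i"
  shows "card ((\<lambda>j. g (i + 1 - j) i \<inter> set ps) ` {1..2 ^ length ps}) = 2 ^ length ps"
proof -
  have "counter_val ps (g (i + 1 - j)) i = j - 1" if "j \<in> {1..2 ^ length ps}" for j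
    using assms(1)[of "i + 1 - j" "j - 1"] assms(2) that by auto
  then have "inj_on (\<lambda>j. counter_val ps (g (i + 1 - j)) i) {1..2 ^ length ps}"
    by (auto simp: inj_on_def)
  then show ?thesis
    using card_image_trace_slices[where f = "\<lambda>j. g (i + 1 - j)"] by simp
qed

theorem proposition1:
  fixes ps :: "nat list" and p :: nat and s :: stand
  assumes "length ps \<ge> 1" and "distinct ps" and "p \<notin> set ps" and "s \<noteq> Univ"
  shows "satisfiable (phi_C ps p s) \<and>
    (\<forall>Pi L \<sigma>. is_model Pi L \<and> \<sigma> \<in> Pi \<and> sat Pi L \<sigma> 0 (phi_C ps p s) \<longrightarrow>
       infinite (L s) \<and>
       (\<forall>i > 2 ^ length ps. \<forall>m < 2 ^ length ps. \<exists>\<sigma>'\<in>Pi. counter_val ps \<sigma>' i = m) \<and>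
       (\<forall>i > 2 ^ length ps. \<exists>f :: nat \<Rightarrow> trace. (\<forall>j\<in>{1..2 ^ length ps}. f j \<in> Pi) \<and>
          card ((\<lambda>j. f j i \<inter> set ps) ` {1..2 ^ length ps}) = 2 ^ length ps))"
proof (intro conjI allI impI)
  let ?N = "2 ^ length ps :: nat"
  show "satisfiable (phi_C ps p s)"
    using assms(2,3) by (rule satisfiable_phi_C)
  fix Pi L \<sigma>
  assume "is_model Pi L \<and> \<sigma> \<in> Pi \<and> sat Pi L \<sigma> 0 (phi_C ps p s)"
  then have LPi: "L s \<subseteq> Pi" and sat: "sat Pi L \<sigma> 0 (phi_C ps p s)"
    by (simp_all add: is_model_def)
  obtain g where range_g: "range g \<subseteq> L s" and "inj g"
    and cnt: "\<And>i d. counter_val ps (g i) (i + d) = d mod ?N"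
    using phi_C_witnesses[OF sat] by blast
  show "infinite (L s)"
    using range_g \<open>inj g\<close> by (meson finite_imageD finite_subset infinite_UNIV_nat)
  show "\<exists>\<sigma>'\<in>Pi. counter_val ps \<sigma>' i = m" if "?N < i" "m < ?N" for i m
    using cnt[of "i - m" m] that range_g LPi by (intro bexI[of _ "g (i - m)"]) auto
  show "\<exists>f. (\<forall>j\<in>{1..?N}. f j \<in> Pi) \<and> card ((\<lambda>j. f j i \<inter> set ps) ` {1..?N}) = ?N"
    if "?N < i" for i
    using card_slices_of_staggered_counters[OF cnt, of i] that range_g LPi
    by (intro exI[of _ "\<lambda>j. g (i + 1 - j)"]) auto
qed

end
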